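(* Let $A$, $B$ be lattices, where $A$ is generated by a set of join prime elements and satisfies Whitman's condition (W). Let $g\colon A\to D$ and $h\colon B\to D$ be epimorphisms onto a lattice $D$. If the fiber product $\{(a,b)\in A\times B: g(a)=h(b)\}$ is a finitely generated sublattice of $A\times B$, then $h$ is lower bounded.
   Context: Whitman's condition (W): for all finite $S,T$, if $\bigwedge S\le\bigvee T$ then some $s\in S$ has $s\le\bigvee T$ or some $t\in T$ has $\bigwedge S\le t$. An element $p$ is join prime if $p\le x\vee y$ implies $p\le x$ or $p\le y$. A lattice homomorphism $h\colon B\to D$ is lower bounded if for every $d\in D$ the set $\{x\in B: h(x)\ge d\}$ is empty or has a least element. *)

theory Defs
  imports Main "HOL-Library.Product_Order"
begin

inductive_set lat_gen :: "'a::lattice set \<Rightarrow> 'a set" for X :: "'a set" where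
  base: "x \<in> X \<Longrightarrow> x \<in> lat_gen X"
| join: "x \<in> lat_gen X \<Longrightarrow> y \<in> lat_gen X \<Longrightarrow> sup x y \<in> lat_gen X"
| meet: "x \<in> lat_gen X \<Longrightarrow> y \<in> lat_gen X \<Longrightarrow> inf x y \<in> lat_gen X"

definition join_prime :: "'a::lattice \<Rightarrow> bool" where
  "join_prime p \<longleftrightarrow> (\<forall>x y. p \<le> sup x y \<longrightarrow> p \<le> x \<or> p \<le> y)"

definition whitman :: "'a::lattice itself \<Rightarrow> bool" where
  "whitman _ \<longleftrightarrow> (\<forall>S T :: 'a set. finite S \<and> S \<noteq> {} \<and> finite T \<and> T \<noteq> {} \<and>
      Inf_fin S \<le> Sup_fin T \<longrightarrow> (\<exists>s\<in>S. s \<le> Sup_fin T) \<or> (\<exists>t\<in>T. Inf_fin S \<le> t))"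

definition lattice_hom :: "('a::lattice \<Rightarrow> 'b::lattice) \<Rightarrow> bool" where
  "lattice_hom f \<longleftrightarrow> (\<forall>x y. f (sup x y) = sup (f x) (f y) \<and> f (inf x y) = inf (f x) (f y))"

definition lower_bounded :: "('a::lattice \<Rightarrow> 'b::lattice) \<Rightarrow> bool" where
  "lower_bounded h \<longleftrightarrow> (\<forall>d. {x. d \<le> h x} = {} \<or> (\<exists>m. m \<in> {x. d \<le> h x} \<and> (\<forall>x\<in>{x. d \<le> h x}. m \<le> x)))"

definition fiber_product :: "('a \<Rightarrow> 'd) \<Rightarrow> ('b \<Rightarrow> 'd) \<Rightarrow> ('a \<times> 'b) set" where
  "fiber_product g h = {(a, b). g a = h b}"

end

theory Submission
  imports Defs
begin

text \<open>For every \<open>a \<in> A\<close> we construct \<open>\<beta> a \<in> B\<close> with \<open>g a \<le> h (\<beta> a)\<close> such that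
  \<open>\<beta> a \<le> y\<close> whenever \<open>(x, y)\<close> lies in the fiber product and \<open>a \<le> x\<close>. Then \<open>\<beta> a\<close> is the least
  \<open>y\<close> with \<open>g a \<le> h y\<close>: given such \<open>y\<close>, pick \<open>x\<close> with \<open>g x = h y\<close>; the pair \<open>(x \<squnion> a, y)\<close>
  lies in the fiber product. The witnesses are built by induction over the join prime generators of
  \<open>A\<close>: joins are handled by joins, while for a generator or a meet \<open>\<beta> a\<close> is the meet of the second
  coordinates of the finitely many generators \<open>(x, y)\<close> of the fiber product with \<open>a \<le> x\<close>,
  together with an \<open>h\<close>-preimage of \<open>g a\<close>, respectively the witnesses of the two meetands.
  That this meet stays below \<open>y\<close> for all of the fiber product is shown by induction over the
  generated sublattice, where join primeness, respectively (W), handles the join step.\<close>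

lemma lattice_hom_mono:
  assumes "lattice_hom f" "x \<le> y"
  shows "f x \<le> f y"
  by (metis assms le_iff_sup lattice_hom_def)

lemma lattice_hom_Inf_fin_lower:
  assumes "lattice_hom h" "finite S" "S \<noteq> {}" "\<And>v. v \<in> S \<Longrightarrow> c \<le> h v"
  shows "c \<le> h (Inf_fin S)"
  using assms(2-4)
proof (induction S rule: finite_ne_induct)
  case (singleton x)
  then show ?case by simp
next
  case (insert x F)
  then show ?case using assms(1) unfolding lattice_hom_def by simp
qed

lemma whitman_binary:
  assumes "whitman TYPE('a::lattice)" and "inf a1 a2 \<le> sup x (y :: 'a)"
  shows "a1 \<le> sup x y \<or> a2 \<le> sup x y \<or> inf a1 a2 \<le> x \<or> inf a1 a2 \<le> y"
  using assms(1)[unfolded whitman_def, rule_format, of "{a1, a2}" "{x, y}"] assms(2) by auto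

lemma lat_gen_upper_transfer:
  fixes G :: "('a::lattice \<times> 'b::lattice) set"
  assumes gen: "\<And>z. z \<in> G \<Longrightarrow> a \<le> fst z \<Longrightarrow> m \<le> snd z"
    and split: "\<And>x y. x \<in> lat_gen G \<Longrightarrow> y \<in> lat_gen G \<Longrightarrow> a \<le> sup (fst x) (fst y) \<Longrightarrow>
                  a \<le> fst x \<or> a \<le> fst y \<or> m \<le> sup (snd x) (snd y)"
    and "z \<in> lat_gen G" "a \<le> fst z"
  shows "m \<le> snd z"
  using assms(3,4)
proof (induction z rule: lat_gen.induct)
  case (base z)
  then show ?case by (rule gen)
next
  case (join x y)
  then have "a \<le> fst x \<or> a \<le> fst y \<or> m \<le> sup (snd x) (snd y)"
    using split by simp
  with join.IH show ?case by (auto intro: le_supI1 le_supI2)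
next
  case (meet x y)
  then show ?case by simp
qed

definition lower_witness ::
    "('a::lattice \<Rightarrow> 'd::lattice) \<Rightarrow> ('b::lattice \<Rightarrow> 'd) \<Rightarrow> ('a \<times> 'b) set \<Rightarrow> 'a \<Rightarrow> 'b \<Rightarrow> bool" where
  "lower_witness g h F a b \<longleftrightarrow> g a \<le> h b \<and> (\<forall>z\<in>F. a \<le> fst z \<longrightarrow> b \<le> snd z)"

lemma lower_witness_sup:
  assumes "lattice_hom g" "lattice_hom h"
    and "lower_witness g h F a1 b1" "lower_witness g h F a2 b2"
  shows "lower_witness g h F (sup a1 a2) (sup b1 b2)"
  using assms unfolding lower_witness_def lattice_hom_def by (auto intro: le_supI1 le_supI2)

lemma lower_witness_Inf_fin:
  fixes G :: "('a::lattice \<times> 'b::lattice) set"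
  assumes g: "lattice_hom g" and h: "lattice_hom h"
    and G: "finite G" "\<And>z. z \<in> G \<Longrightarrow> g (fst z) = h (snd z)"
    and E: "finite E" "E \<noteq> {}" "\<And>e. e \<in> E \<Longrightarrow> g a \<le> h e"
    and split: "\<And>x y. x \<in> lat_gen G \<Longrightarrow> y \<in> lat_gen G \<Longrightarrow> a \<le> sup (fst x) (fst y) \<Longrightarrow>
                  a \<le> fst x \<or> a \<le> fst y \<or> (\<exists>e\<in>E. e \<le> sup (snd x) (snd y))"
  shows "lower_witness g h (lat_gen G) a (Inf_fin (E \<union> snd ` {z \<in> G. a \<le> fst z}))"
    (is "lower_witness g h _ a (Inf_fin ?S)")
proof -
  have S: "finite ?S" "?S \<noteq> {}" using G(1) E(1,2) by auto
  have "g a \<le> h (Inf_fin ?S)"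
  proof (rule lattice_hom_Inf_fin_lower[OF h S])
    fix v assume "v \<in> ?S"
    then show "g a \<le> h v"
      using E(3) G(2) lattice_hom_mono[OF g] by (force intro: order_trans)
  qed
  moreover have "Inf_fin ?S \<le> snd z" if "z \<in> lat_gen G" "a \<le> fst z" for z
  proof (rule lat_gen_upper_transfer[OF _ _ that])
    show "Inf_fin ?S \<le> snd z" if "z \<in> G" "a \<le> fst z" for z
      using that S by (auto intro: Inf_fin.coboundedI)
    show "a \<le> fst x \<or> a \<le> fst y \<or> Inf_fin ?S \<le> sup (snd x) (snd y)"
      if "x \<in> lat_gen G" "y \<in> lat_gen G" "a \<le> sup (fst x) (fst y)" for x y
      using split[OF that] S by (auto intro: Inf_fin.coboundedI order_trans)
  qed
  ultimately show ?thesis unfolding lower_witness_def by blast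
qed

lemma lower_witness_exists:
  fixes G :: "('a::lattice \<times> 'b::lattice) set"
  assumes P: "\<And>p. p \<in> P \<Longrightarrow> join_prime p" and W: "whitman TYPE('a)"
    and g: "lattice_hom g" and h: "lattice_hom h" and h_surj: "surj h"
    and G: "finite G" "\<And>z. z \<in> G \<Longrightarrow> g (fst z) = h (snd z)"
    and "a \<in> lat_gen P"
  shows "\<exists>b. lower_witness g h (lat_gen G) a b"
  using \<open>a \<in> lat_gen P\<close>
proof (induction a rule: lat_gen.induct)
  case (base p)
  obtain b where "h b = g p" using h_surj by (metis surjD)
  have "lower_witness g h (lat_gen G) p (Inf_fin ({b} \<union> snd ` {z \<in> G. p \<le> fst z}))"
  proof (rule lower_witness_Inf_fin[OF g h G])
    show "p \<le> fst x \<or> p \<le> fst y \<or> (\<exists>e\<in>{b}. e \<le> sup (snd x) (snd y))"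
      if "p \<le> sup (fst x) (fst y)" for x y
      using P[OF base] that unfolding join_prime_def by blast
  qed (use \<open>h b = g p\<close> in auto)
  then show ?case by blast
next
  case (join a1 a2)
  then show ?case using lower_witness_sup[OF g h] by blast
next
  case (meet a1 a2)
  obtain b1 b2 where b: "lower_witness g h (lat_gen G) a1 b1" "lower_witness g h (lat_gen G) a2 b2"
    using meet.IH by blast
  have "lower_witness g h (lat_gen G) (inf a1 a2)
          (Inf_fin ({b1, b2} \<union> snd ` {z \<in> G. inf a1 a2 \<le> fst z}))"
  proof (rule lower_witness_Inf_fin[OF g h G])
    fix e assume "e \<in> {b1, b2}"
    moreover have "g (inf a1 a2) \<le> g a1" "g (inf a1 a2) \<le> g a2"
      using lattice_hom_mono[OF g] by auto
    ultimately show "g (inf a1 a2) \<le> h e"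
      using b unfolding lower_witness_def by (auto intro: order_trans)
  next
    fix x y assume xy: "x \<in> lat_gen G" "y \<in> lat_gen G" and le: "inf a1 a2 \<le> sup (fst x) (fst y)"
    have "sup x y \<in> lat_gen G" using xy by (rule lat_gen.join)
    with b have "a1 \<le> sup (fst x) (fst y) \<Longrightarrow> b1 \<le> sup (snd x) (snd y)"
      "a2 \<le> sup (fst x) (fst y) \<Longrightarrow> b2 \<le> sup (snd x) (snd y)"
      unfolding lower_witness_def by force+
    then show "inf a1 a2 \<le> fst x \<or> inf a1 a2 \<le> fst y \<or> (\<exists>e\<in>{b1, b2}. e \<le> sup (snd x) (snd y))"
      using whitman_binary[OF W le] by blast
  qed auto
  then show ?case by blast
qed

lemma lower_bounded_if_lower_witnesses:
  assumes g: "lattice_hom g" "surj g"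
    and witness: "\<And>a. \<exists>b. lower_witness g h (fiber_product g h) a b"
  shows "lower_bounded h"
  unfolding lower_bounded_def
proof (intro allI disjI2)
  fix d
  obtain a where a: "g a = d" using g(2) by (metis surjD)
  obtain b where b: "lower_witness g h (fiber_product g h) a b" using witness by blast
  have "b \<le> y" if "d \<le> h y" for y
  proof -
    obtain x where "g x = h y" using g(2) by (metis surjD)
    then have "g (sup x a) = h y"
      using g(1) a that unfolding lattice_hom_def by (simp add: sup_absorb1)
    then have "(sup x a, y) \<in> fiber_product g h" by (simp add: fiber_product_def)
    then show ?thesis using b unfolding lower_witness_def by force
  qed
  then show "\<exists>m. m \<in> {y. d \<le> h y} \<and> (\<forall>y\<in>{y. d \<le> h y}. m \<le> y)"
    using a b unfolding lower_witness_def by blast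
qed

theorem mainTheorem13:
  fixes g :: "'a::lattice \<Rightarrow> 'd::lattice" and h :: "'b::lattice \<Rightarrow> 'd"
  assumes genA: "\<exists>P. (\<forall>p\<in>P. join_prime p) \<and> lat_gen P = (UNIV :: 'a set)"
    and W: "whitman TYPE('a)"
    and g_hom: "lattice_hom g" and g_surj: "surj g"
    and h_hom: "lattice_hom h" and h_surj: "surj h"
    and fg: "\<exists>G. finite G \<and> lat_gen G = fiber_product g h"
  shows "lower_bounded h"
proof -
  obtain P where P: "\<forall>p\<in>P. join_prime p" "lat_gen P = (UNIV :: 'a set)" using genA by blast
  obtain G where G: "finite G" "lat_gen G = fiber_product g h" using fg by blast
  have "g (fst z) = h (snd z)" if "z \<in> G" for z
    using lat_gen.base[OF that] G(2) by (auto simp: fiber_product_def)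
  then have "\<exists>b. lower_witness g h (fiber_product g h) a b" for a
    using lower_witness_exists[OF _ W g_hom h_hom h_surj G(1), of P a] P G(2) by auto
  then show ?thesis by (rule lower_bounded_if_lower_witnesses[OF g_hom g_surj])
qed

end
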